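(* Let $F:\mathbb{R}^p\to\mathbb{R}^p$ be single-valued, $L$-Lipschitz continuous and $\rho$-co-hypomonotone for some $\rho\ge0$, i.e. $\langle Fx-Fy,x-y\rangle\ge-\rho\|Fx-Fy\|^2$ for all $x,y\in\mathrm{dom}\,F$. Let $\kappa_1,\kappa_2\ge0$, $\beta\in(0,1]$, $\eta>0$, and let $\{(x^k,y^k)\}$ be generated by: start from $x^0\in\mathrm{dom}\,F$, set $x^{-1}=y^{-1}:=x^0$, and for $k\ge0$ $$y^k:=x^k-\tfrac{\eta}{\beta}u^k,\qquad x^{k+1}:=x^k-\eta Fy^k,$$ where $u^k\in\mathbb{R}^p$ satisfies $\|Fx^k-u^k\|^2\le\kappa_1\|Fx^k-Fy^{k-1}\|^2+\kappa_2\|Fx^k-Fx^{k-1}\|^2$. Then for any $s>0$, $\omega\ge0$, $\hat\omega\ge0$ and $k\ge0$, $$\begin{aligned}&\|Fx^{k+1}\|^2+\omega\|Fx^{k+1}-Fy^k\|^2+\hat\omega\|Fx^{k+1}-Fx^k\|^2\le\|Fx^k\|^2\\&\quad-\Big[1-\tfrac{1+s}{s}\Big(\hat\omega+\tfrac{2\rho}{\eta}\Big)\Big]\|Fy^k-Fx^k\|^2+\Big[1+\omega+(1+s)\Big(\hat\omega+\tfrac{2\rho}{\eta}\Big)\Big]\tfrac{L^2\eta^2}{\beta^2}\|\beta Fy^k-u^k\|^2.\end{aligned}$$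
   Context: $F$ is $L$-Lipschitz if $\|Fx-Fy\|\le L\|x-y\|$ for all $x,y$. *)

theory Defs
  imports "HOL-Analysis.Analysis"
begin

definition co_hypomonotone :: "real \<Rightarrow> ('a::real_inner \<Rightarrow> 'a) \<Rightarrow> bool" where
  "co_hypomonotone \<rho> F \<longleftrightarrow>
     (\<forall>x y. inner (F x - F y) (x - y) \<ge> - \<rho> * (norm (F x - F y))\<^sup>2)"

end

theory Submission
  imports Defs
begin

text \<open>Write a = F x_k, b = F y_k and c = F x_(k+1). Expanding squares gives
  |c|^2 = |a|^2 + 2<c - a, b> + |c - b|^2 - |b - a|^2. Since x_(k+1) - x_k = -eta b,
  co-hypomonotonicity bounds the cross term by (2 rho / eta) |c - a|^2, and Young's inequality
  splits |c - a|^2 into |c - b|^2 and |b - a|^2. Finally x_(k+1) - y_k = -(eta/beta)(beta b - u_k),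
  so the Lipschitz property bounds |c - b|^2.\<close>

lemma power2_add_le_weighted:
  fixes p q s :: real
  assumes "s > 0"
  shows "(p + q)\<^sup>2 \<le> (1 + s) * p\<^sup>2 + (1 + s) / s * q\<^sup>2"
proof -
  have "0 \<le> (s * p - q)\<^sup>2 / s" using assms by simp
  also have "\<dots> = s * p\<^sup>2 + q\<^sup>2 / s - 2 * p * q"
    using assms by (simp add: field_simps power2_eq_square)
  finally have "2 * p * q \<le> s * p\<^sup>2 + q\<^sup>2 / s" by simp
  moreover have "(1 + s) / s * q\<^sup>2 = q\<^sup>2 + q\<^sup>2 / s" using assms by (simp add: field_simps)
  ultimately show ?thesis by (simp add: power2_eq_square algebra_simps)
qed

lemma norm_add_power2_le_weighted:
  fixes p q :: "'a::real_normed_vector"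
  assumes "s > 0"
  shows "(norm (p + q))\<^sup>2 \<le> (1 + s) * (norm p)\<^sup>2 + (1 + s) / s * (norm q)\<^sup>2"
proof -
  have "(norm (p + q))\<^sup>2 \<le> (norm p + norm q)\<^sup>2"
    by (simp add: norm_triangle_ineq power_mono)
  also have "\<dots> \<le> (1 + s) * (norm p)\<^sup>2 + (1 + s) / s * (norm q)\<^sup>2"
    using power2_add_le_weighted[OF assms] .
  finally show ?thesis .
qed

lemma power2_norm_three_point:
  fixes a b c :: "'a::real_inner"
  shows "(norm c)\<^sup>2 = (norm a)\<^sup>2 + 2 * inner (c - a) b + (norm (c - b))\<^sup>2 - (norm (b - a))\<^sup>2"
  by (simp add: power2_norm_eq_inner inner_diff_left inner_diff_right inner_commute algebra_simps)

lemma lipschitz_on_UNIV_power2: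
  assumes "L-lipschitz_on UNIV F"
  shows "(norm (F a - F b))\<^sup>2 \<le> L\<^sup>2 * (norm (a - b))\<^sup>2"
proof -
  have "norm (F a - F b) \<le> L * norm (a - b)"
    using lipschitz_onD[OF assms, of a b] by (simp add: dist_norm)
  then have "(norm (F a - F b))\<^sup>2 \<le> (L * norm (a - b))\<^sup>2"
    by (simp add: power_mono)
  then show ?thesis by (simp add: power_mult_distrib)
qed

lemma co_hypomonotone_forward_step:
  assumes "co_hypomonotone \<rho> F" "\<eta> > 0" "x' = x - \<eta> *\<^sub>R F y"
  shows "2 * inner (F x' - F x) (F y) \<le> 2 * \<rho> / \<eta> * (norm (F x' - F x))\<^sup>2"
proof -
  have "inner (F x' - F x) (x' - x) \<ge> - \<rho> * (norm (F x' - F x))\<^sup>2"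
    using assms(1) unfolding co_hypomonotone_def by blast
  then have "\<eta> * inner (F x' - F x) (F y) \<le> \<rho> * (norm (F x' - F x))\<^sup>2"
    using assms(3) by simp
  then show ?thesis using assms(2) by (simp add: field_simps)
qed

lemma co_hypomonotone_forward_step_descent:
  fixes F :: "'a::real_inner \<Rightarrow> 'a"
  assumes "co_hypomonotone \<rho> F" "\<rho> \<ge> 0" "\<eta> > 0" "x' = x - \<eta> *\<^sub>R F y"
    and "s > 0" "\<omega> \<ge> 0" "\<omega>' \<ge> 0"
  defines "T \<equiv> \<omega>' + 2 * \<rho> / \<eta>"
  shows "(norm (F x'))\<^sup>2 + \<omega> * (norm (F x' - F y))\<^sup>2 + \<omega>' * (norm (F x' - F x))\<^sup>2
         \<le> (norm (F x))\<^sup>2 - (1 - (1 + s) / s * T) * (norm (F y - F x))\<^sup>2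
           + (1 + \<omega> + (1 + s) * T) * (norm (F x' - F y))\<^sup>2"
proof -
  let ?a = "F x" and ?b = "F y" and ?c = "F x'"
  have T_nonneg: "T \<ge> 0" using assms(2,3,7) unfolding T_def by simp
  have cross: "2 * inner (?c - ?a) ?b \<le> 2 * \<rho> / \<eta> * (norm (?c - ?a))\<^sup>2"
    using co_hypomonotone_forward_step[OF assms(1,3,4)] .
  have young: "(norm (?c - ?a))\<^sup>2 \<le> (1 + s) * (norm (?c - ?b))\<^sup>2 + (1 + s) / s * (norm (?b - ?a))\<^sup>2"
    using norm_add_power2_le_weighted[OF assms(5), of "?c - ?b" "?b - ?a"] by simp
  have "(norm ?c)\<^sup>2 + \<omega> * (norm (?c - ?b))\<^sup>2 + \<omega>' * (norm (?c - ?a))\<^sup>2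
     \<le> (norm ?a)\<^sup>2 - (norm (?b - ?a))\<^sup>2 + (1 + \<omega>) * (norm (?c - ?b))\<^sup>2 + T * (norm (?c - ?a))\<^sup>2"
    using power2_norm_three_point[of ?c ?a ?b] cross unfolding T_def by (simp add: algebra_simps)
  also have "\<dots> \<le> (norm ?a)\<^sup>2 - (norm (?b - ?a))\<^sup>2 + (1 + \<omega>) * (norm (?c - ?b))\<^sup>2
      + T * ((1 + s) * (norm (?c - ?b))\<^sup>2 + (1 + s) / s * (norm (?b - ?a))\<^sup>2)"
    using young T_nonneg by (simp add: mult_left_mono)
  also have "\<dots> = (norm ?a)\<^sup>2 - (1 - (1 + s) / s * T) * (norm (?b - ?a))\<^sup>2
      + (1 + \<omega> + (1 + s) * T) * (norm (?c - ?b))\<^sup>2"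
    by (simp add: algebra_simps)
  finally show ?thesis .
qed

theorem lemma3:
  fixes F :: "'a::euclidean_space \<Rightarrow> 'a"
    and x y u :: "int \<Rightarrow> 'a"
    and L \<rho> \<kappa>\<^sub>1 \<kappa>\<^sub>2 \<beta> \<eta> s \<omega> \<omega>' :: real
    and k :: int
  assumes Lip: "L-lipschitz_on UNIV F"
    and rho: "\<rho> \<ge> 0"
    and cohypo: "co_hypomonotone \<rho> F"
    and kappa: "\<kappa>\<^sub>1 \<ge> 0" "\<kappa>\<^sub>2 \<ge> 0"
    and beta: "0 < \<beta>" "\<beta> \<le> 1"
    and eta: "\<eta> > 0"
    and init: "x (-1) = x 0" "y (-1) = x 0"
    and ystep: "\<And>j. j \<ge> 0 \<Longrightarrow> y j = x j - (\<eta> / \<beta>) *\<^sub>R u j"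
    and xstep: "\<And>j. j \<ge> 0 \<Longrightarrow> x (j + 1) = x j - \<eta> *\<^sub>R F (y j)"
    and ucond: "\<And>j. j \<ge> 0 \<Longrightarrow>
        (norm (F (x j) - u j))\<^sup>2 \<le> \<kappa>\<^sub>1 * (norm (F (x j) - F (y (j - 1))))\<^sup>2
                                + \<kappa>\<^sub>2 * (norm (F (x j) - F (x (j - 1))))\<^sup>2"
    and s: "s > 0" and omega: "\<omega> \<ge> 0" "\<omega>' \<ge> 0"
    and k: "k \<ge> 0"
  shows "(norm (F (x (k + 1))))\<^sup>2 + \<omega> * (norm (F (x (k + 1)) - F (y k)))\<^sup>2
           + \<omega>' * (norm (F (x (k + 1)) - F (x k)))\<^sup>2
         \<le> (norm (F (x k)))\<^sup>2
           - (1 - (1 + s) / s * (\<omega>' + 2 * \<rho> / \<eta>)) * (norm (F (y k) - F (x k)))\<^sup>2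
           + (1 + \<omega> + (1 + s) * (\<omega>' + 2 * \<rho> / \<eta>)) * (L\<^sup>2 * \<eta>\<^sup>2 / \<beta>\<^sup>2)
               * (norm (\<beta> *\<^sub>R F (y k) - u k))\<^sup>2"
proof -
  define T where "T = \<omega>' + 2 * \<rho> / \<eta>"
  have "x (k + 1) - y k = (x k - \<eta> *\<^sub>R F (y k)) - (x k - (\<eta> / \<beta>) *\<^sub>R u k)"
    using xstep[OF k] ystep[OF k] by simp
  also have "\<dots> = - (\<eta> / \<beta>) *\<^sub>R (\<beta> *\<^sub>R F (y k) - u k)"
    using beta by (simp add: algebra_simps)
  finally have residual: "(norm (F (x (k + 1)) - F (y k)))\<^sup>2
      \<le> L\<^sup>2 * \<eta>\<^sup>2 / \<beta>\<^sup>2 * (norm (\<beta> *\<^sub>R F (y k) - u k))\<^sup>2"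
    using lipschitz_on_UNIV_power2[OF Lip, of "x (k + 1)" "y k"] eta beta
    by (simp add: power_mult_distrib power_divide)
  have coefficient: "1 + \<omega> + (1 + s) * T \<ge> 0"
    using rho eta s omega unfolding T_def by simp
  have "(1 + \<omega> + (1 + s) * T) * (norm (F (x (k + 1)) - F (y k)))\<^sup>2
      \<le> (1 + \<omega> + (1 + s) * T) * (L\<^sup>2 * \<eta>\<^sup>2 / \<beta>\<^sup>2) * (norm (\<beta> *\<^sub>R F (y k) - u k))\<^sup>2"
    using mult_left_mono[OF residual coefficient] by (simp only: mult.assoc)
  then show ?thesis
    using co_hypomonotone_forward_step_descent[OF cohypo rho eta xstep[OF k] s omega]
    unfolding T_def by linarith
qed

end
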